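(* Let $A=S(n)$, where $n$ is squarefree and every prime divisor of $n$ is at least 7. Let $S:(x_1,\ldots,x_k)$ be an $A$-extremal sequence for the Davenport constant. If $\Omega(n)\geq 3$, then $S$ is equivalent with respect to $A$ to a sequence $(y_1,\ldots,y_k)$ such that there is a prime divisor $p$ of $n$ for which $y_1$ is exactly the one term not divisible by $p$ (i.e. $p\nmid y_1$ and $p\mid y_i$ for $2\leq i\leq k$), and, letting $n'=n/p$, $T:(y_2,\ldots,y_k)$ and $T'$ the sequence in $\mathbb{Z}_{n'}$ which is the image of $T$ under the natural map $\mathbb{Z}_n\to\mathbb{Z}_{n'}$, the sequence $T'$ is a $U(n')$-extremal sequence for the Davenport constant. If $\Omega(n)=2$, then $S:(x_1,x_2)$ is either equivalent with respect to $A$ to a sequence $(y_1,y_2)$ such that there is a prime divisor $p$ of $n$ with $p\nmid y_1$, $p\mid y_2$, and, with $n'=n/p$, the image of $(y_2)$ under the natural map $\mathbb{Z}_n\to\mathbb{Z}_{n'}$ is a $U(n')$-extremal sequence for the Davenport constant; or $S$ is equivalent with respect to $A$ to a sequence $(y_1,y_2)$, where $y_1\in S(n)$ and $-y_2\in U(n)\setminus S(n)$.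
   Context: Here $n$ is odd, $\mathbb{Z}_n$ is the integers mod $n$, $U(n)$ is its group of units, and $S(n)$ is the kernel of the homomorphism $U(n)\to\{1,-1\}$, $a\mapsto\left(\frac{a}{n}\right)$ (the Jacobi symbol). $\Omega(n)$ is the number of prime factors of $n$ counted with multiplicity. For $A\subseteq\mathbb{Z}_m\setminus\{0\}$, $D_A(m)$ is the least $k$ such that every sequence of length $k$ in $\mathbb{Z}_m$ has a (nonempty) $A$-weighted zero-sum subsequence; an $A$-extremal sequence for the Davenport constant is a sequence of length $D_A(m)-1$ with no $A$-weighted zero-sum subsequence. Two sequences $(x_1,\ldots,x_k)$, $(y_1,\ldots,y_k)$ are equivalent with respect to a multiplicative group $A$ if there are $a_1,\ldots,a_k\in A$, a unit $c$ and a permutation $\sigma$ with $y_{\sigma(i)}=c\,a_ix_i$ for all $i$. The natural map $\mathbb{Z}_n\to\mathbb{Z}_m$ (for $m\mid n$) is $a+n\mathbb{Z}\mapsto a+m\mathbb{Z}$. *)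

theory Defs
  imports "HOL-Number_Theory.Number_Theory" "HOL-Computational_Algebra.Squarefree"
begin

text \<open>Elements of Z_m are represented by integers in {0..<m}; sequences by int lists.\<close>

definition Jacobi :: "int \<Rightarrow> nat \<Rightarrow> int" where
  "Jacobi a n = (\<Prod>p\<in>prime_factors n. Legendre a (int p) ^ multiplicity p n)"

definition Uset :: "nat \<Rightarrow> int set" where
  "Uset n = {a \<in> {0..<int n}. coprime a (int n)}"

definition Sset :: "nat \<Rightarrow> int set" where
  "Sset n = {a \<in> Uset n. Jacobi a n = 1}"

definition Omega :: "nat \<Rightarrow> nat" where
  "Omega n = size (prime_factorization n)"

definition is_seq :: "nat \<Rightarrow> int list \<Rightarrow> bool" where
  "is_seq m xs \<longleftrightarrow> set xs \<subseteq> {0..<int m}"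

definition has_wzs :: "int set \<Rightarrow> nat \<Rightarrow> int list \<Rightarrow> bool" where
  "has_wzs A m xs \<longleftrightarrow> (\<exists>I a. I \<noteq> {} \<and> I \<subseteq> {..<length xs} \<and> (\<forall>i\<in>I. a i \<in> A)
      \<and> (\<Sum>i\<in>I. a i * xs ! i) mod int m = 0)"

definition davenport :: "int set \<Rightarrow> nat \<Rightarrow> nat" where
  "davenport A m = (LEAST k. \<forall>xs. length xs = k \<and> is_seq m xs \<longrightarrow> has_wzs A m xs)"

definition extremal :: "int set \<Rightarrow> nat \<Rightarrow> int list \<Rightarrow> bool" where
  "extremal A m xs \<longleftrightarrow> is_seq m xs \<and> length xs = davenport A m - 1 \<and> \<not> has_wzs A m xs"

definition seq_equiv :: "int set \<Rightarrow> nat \<Rightarrow> int list \<Rightarrow> int list \<Rightarrow> bool" where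
  "seq_equiv A m xs ys \<longleftrightarrow> is_seq m xs \<and> is_seq m ys \<and> length xs = length ys \<and>
     (\<exists>a c \<sigma>. (\<forall>i<length xs. a i \<in> A) \<and> c \<in> Uset m \<and>
        bij_betw \<sigma> {..<length xs} {..<length xs} \<and>
        (\<forall>i<length xs. ys ! (\<sigma> i) = (c * a i * xs ! i) mod int m))"

end

(*
  Write P for the set of prime factors of n. Both D_{S(n)}(n) and D_{U(n)}(n) equal |P| + 1: the
  cofactors n / p, p in P, form a zero-sum free sequence, since for every nonempty set of its terms
  some prime divides all of them but one.

  Conversely, modulo a prime p >= 7 each of the eight sign patterns of quadratic characters
  occurs in some u + v = w. Hence three or more terms prime to p admit a zero sum with weights of
  any prescribed quadratic characters, and two such terms admit one with unit weights. By the
  Chinese remainder theorem such local weights glue to weights in S(n) as soon as no prime leaves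
  exactly one term undivided and the Jacobi symbols can be corrected at some prime: either at a
  prime with three terms prime to it, or, for every non-unit term, at a prime dividing it. With
  a parity (pigeonhole) argument this gives the upper bound.

  For an extremal sequence the same criteria show that there is at most one unit term, unless
  Omega(n) = 2 and both terms are units. Then some prime p divides all terms but one; moving that
  term to the front, the remaining terms reduced modulo n / p stay zero-sum free over U(n / p),
  and their number is D_{U(n/p)}(n / p) - 1.
*)
theory Submission
  imports Defs
begin

section \<open>The Legendre symbol\<close>

lemma Legendre_cong:
  assumes "[a = b] (mod p)"
  shows "Legendre a p = Legendre b p"
  using assms by (simp add: Legendre_def QuadRes_def cong_def)

lemma Legendre_eq_0_iff: "Legendre a p = 0 \<longleftrightarrow> p dvd a"
  by (simp add: Legendre_def cong_0_iff)

lemma Legendre_pm1: "\<not> p dvd a \<Longrightarrow> Legendre a p \<in> {1, -1}"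
  by (simp add: Legendre_def cong_0_iff)

lemma Legendre_1: "p > 1 \<Longrightarrow> Legendre 1 p = 1"
  by (auto simp: Legendre_def QuadRes_def cong_def intro: exI[of _ 1])

lemma Legendre_mult:
  assumes "prime p" "2 < p"
  shows "Legendre (a * b) (int p) = Legendre a (int p) * Legendre b (int p)"
proof -
  let ?h = "(p - 1) div 2"
  have "[Legendre (a * b) p = (a * b) ^ ?h] (mod p)"
    by (rule euler_criterion[OF assms])
  moreover have "[Legendre a p * Legendre b p = a ^ ?h * b ^ ?h] (mod p)"
    by (intro cong_mult euler_criterion[OF assms])
  ultimately have "[Legendre (a * b) p + 1 = Legendre a p * Legendre b p + 1] (mod p)"
    by (metis cong_add_rcancel cong_sym cong_trans power_mult_distrib)
  moreover have "Legendre (a * b) p + 1 \<in> {0, 1, 2}" "Legendre a p * Legendre b p + 1 \<in> {0, 1, 2}"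
    by (auto simp: Legendre_def)
  ultimately have "Legendre (a * b) p + 1 = Legendre a p * Legendre b p + 1"
    using \<open>2 < p\<close> by (intro cong_less_imp_eq_int) auto
  then show ?thesis
    by simp
qed

lemma Legendre_square:
  assumes "prime p" "2 < p" "\<not> int p dvd x"
  shows "Legendre (x * x) (int p) = 1"
  using Legendre_mult[OF assms(1,2)] Legendre_pm1[OF assms(3)] by auto

lemma Legendre_nonresidue_exists:
  assumes "prime p" "2 < p"
  obtains \<nu> where "Legendre \<nu> (int p) = -1"
proof -
  obtain g where g: "residue_primroot p g"
    using prime_primitive_root_exists prime_gt_1_nat assms by blast
  then have g_ord: "ord p g = p - 1" and "coprime p g"
    using assms(1) by (auto simp: residue_primroot_def totient_prime)
  then have "\<not> int p dvd int g"
    using assms(1) by (metis coprime_common_divisor dvd_refl int_dvd_int_iff not_prime_unit)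
  let ?h = "(p - 1) div 2"
  have "\<not> [g ^ ?h = 1] (mod p)"
    using assms g_ord by (intro ord_minimal) auto
  then have "\<not> [int g ^ ?h = 1] (mod int p)"
    by (metis cong_int_iff of_nat_1 of_nat_power)
  then have "Legendre (int g) p \<noteq> 1"
    using euler_criterion[OF assms, of "int g"] by (metis cong_sym)
  then show ?thesis
    using that Legendre_pm1[OF \<open>\<not> int p dvd int g\<close>] by blast
qed

lemma Legendre_sign_exists:
  assumes "prime p" "2 < p" "e \<in> {1, -1}"
  obtains w where "Legendre w (int p) = e"
proof (cases "e = 1")
  case True
  then show ?thesis
    using that[of 1] Legendre_1[of "int p"] assms(2) by simp
next
  case False
  obtain \<nu> where "Legendre \<nu> (int p) = -1"
    using Legendre_nonresidue_exists[OF assms(1,2)] .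
  then show ?thesis
    using that[of \<nu>] False assms(3) by simp
qed

lemma Legendre_signs_exist:
  assumes "prime p" "2 < p" "\<forall>i\<in>I. e i \<in> {1, -1}"
  obtains c where "\<forall>i\<in>I. Legendre (c i) (int p) = e i"
proof -
  have "\<forall>i\<in>I. \<exists>c. Legendre c p = e i"
    using Legendre_sign_exists[OF assms(1,2)] assms(3) by metis
  from bchoice[OF this] show ?thesis
    using that by blast
qed

lemma Legendre_sign_representatives:
  assumes "\<forall>p\<in>P. prime p \<and> 2 < p"
  obtains r where "\<forall>p\<in>P. \<forall>e\<in>{1, -1}. Legendre (r p e) (int p) = e"
proof -
  have "\<forall>p\<in>P. \<exists>c. \<forall>e\<in>{1, -1}. Legendre (c e) (int p) = e"
  proof
    fix p assume "p \<in> P"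
    with assms have "prime p" "2 < p"
      by auto
    from Legendre_signs_exist[OF this, of "{1, -1}" "\<lambda>e. e"]
    show "\<exists>c. \<forall>e\<in>{1, -1}. Legendre (c e) (int p) = e"
      by blast
  qed
  from bchoice[OF this] show ?thesis
    using that by blast
qed

lemma Legendre_divide:
  assumes "prime p" "2 < p" "\<not> int p dvd y"
  obtains w where "[w * y = u] (mod int p)" "Legendre w (int p) = Legendre u (int p) * Legendre y (int p)"
proof -
  have "coprime y (int p)"
    using assms prime_imp_coprime[of "int p" y] by (simp add: coprime_commute)
  then obtain j where j: "[y * j = 1] (mod int p)"
    using cong_solve_coprime_int by blast
  have "Legendre y p * Legendre j p = Legendre 1 p"
    using Legendre_cong[OF j] Legendre_mult[OF assms(1,2), of y j] by simp
  also have "\<dots> = 1"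
    using Legendre_1[of "int p"] assms(2) by simp
  finally have "Legendre j p = Legendre y p"
    using Legendre_pm1[OF assms(3)] by auto
  then have "Legendre (u * j) p = Legendre u p * Legendre y p"
    using Legendre_mult[OF assms(1,2), of u j] by simp
  moreover have "[u * j * y = u] (mod int p)"
    using cong_scalar_left[OF j, of u] by (simp add: ac_simps)
  ultimately show ?thesis
    using that by blast
qed

section \<open>Quadratic characters of sums modulo a prime\<close>

definition sum_sign_pattern :: "nat \<Rightarrow> int \<Rightarrow> int \<Rightarrow> int \<Rightarrow> bool" where
  "sum_sign_pattern p e1 e2 e3 \<longleftrightarrow>
     (\<exists>u v w. Legendre u p = e1 \<and> Legendre v p = e2 \<and> Legendre w p = e3 \<and> [u + v = w] (mod int p))"

lemma sum_sign_pattern_swap: "sum_sign_pattern p e1 e2 e3 \<Longrightarrow> sum_sign_pattern p e2 e1 e3"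
  unfolding sum_sign_pattern_def by (metis add.commute)

definition nondvd_indices :: "nat \<Rightarrow> int list \<Rightarrow> nat set \<Rightarrow> nat set" where
  "nondvd_indices p xs I = {i \<in> I. \<not> int p dvd xs ! i}"

lemma dvd_weighted_sum_iff_nondvd_indices:
  assumes "finite I"
  shows "int p dvd (\<Sum>i\<in>I. w i * xs ! i) \<longleftrightarrow> int p dvd (\<Sum>i\<in>nondvd_indices p xs I. w i * xs ! i)"
proof -
  let ?N = "nondvd_indices p xs I"
  have "(\<Sum>i\<in>I. w i * xs ! i) = (\<Sum>i\<in>I - ?N. w i * xs ! i) + (\<Sum>i\<in>?N. w i * xs ! i)"
    using assms by (intro sum.subset_diff) (auto simp: nondvd_indices_def)
  moreover have "int p dvd (\<Sum>i\<in>I - ?N. w i * xs ! i)"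
    by (intro dvd_sum) (auto simp: nondvd_indices_def)
  ultimately show ?thesis
    by (simp add: dvd_add_right_iff)
qed

lemma dvd_weighted_sum_cong_nondvd_indices:
  assumes "finite I" "\<forall>i\<in>nondvd_indices p xs I. v i = w i"
  shows "int p dvd (\<Sum>i\<in>I. v i * xs ! i) \<longleftrightarrow> int p dvd (\<Sum>i\<in>I. w i * xs ! i)"
  using assms(2) by (simp add: dvd_weighted_sum_iff_nondvd_indices[OF assms(1)])

context
  fixes p :: nat
  assumes p_prime: "prime p" and p_gt_2: "2 < p"
begin

lemma sum_sign_pattern_neg:
  assumes "sum_sign_pattern p e1 e2 e3"
  shows "sum_sign_pattern p (-e1) (-e2) (-e3)"
proof -
  obtain \<nu> where \<nu>: "Legendre \<nu> (int p) = -1"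
    using Legendre_nonresidue_exists[OF p_prime p_gt_2] .
  obtain u v w where uvw: "Legendre u p = e1" "Legendre v p = e2" "Legendre w p = e3"
    "[u + v = w] (mod int p)"
    using assms unfolding sum_sign_pattern_def by blast
  have "[\<nu> * u + \<nu> * v = \<nu> * w] (mod int p)"
    using cong_scalar_left[OF uvw(4), of \<nu>] by (simp add: distrib_left)
  then show ?thesis
    unfolding sum_sign_pattern_def using Legendre_mult[OF p_prime p_gt_2] \<nu> uvw(1-3)
    by (intro exI[of _ "\<nu> * u"] exI[of _ "\<nu> * v"] exI[of _ "\<nu> * w"]) simp
qed

text \<open>The least positive non-residue s gives (s - 1) + 1 = s.\<close>
lemma sum_sign_pattern_res_res_nonres: "sum_sign_pattern p 1 1 (-1)"
proof -
  define N where "N = {k::nat. 0 < k \<and> Legendre (int k) p = -1}"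
  obtain \<nu> where \<nu>: "Legendre \<nu> (int p) = -1"
    using Legendre_nonresidue_exists[OF p_prime p_gt_2] .
  have "Legendre (\<nu> mod int p) p = -1"
    using \<nu> Legendre_cong[of "\<nu> mod int p" \<nu> "int p"] by (simp add: cong_def)
  moreover from this have "\<nu> mod int p \<noteq> 0"
    using Legendre_eq_0_iff[of "\<nu> mod int p" "int p"] by auto
  moreover have "0 \<le> \<nu> mod int p" "\<nu> mod int p < int p"
    using p_gt_2 by simp_all
  ultimately have \<nu>N: "nat (\<nu> mod int p) \<in> N"
    by (simp add: N_def)
  define s where "s = (LEAST k. k \<in> N)"
  have sN: "s \<in> N" and s_le: "s \<le> nat (\<nu> mod int p)"
    unfolding s_def using \<nu>N by (auto intro: LeastI Least_le)
  have "s \<noteq> 1"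
    using sN Legendre_1[of "int p"] p_gt_2 by (auto simp: N_def)
  with sN have s_gt_1: "s > 1"
    by (simp add: N_def)
  have "s - 1 \<notin> N"
    using not_less_Least[of "s - 1" "\<lambda>k. k \<in> N"] s_gt_1 by (simp add: s_def)
  moreover have "\<not> int p dvd int (s - 1)"
    using s_gt_1 s_le \<open>\<nu> mod int p < int p\<close> zdvd_not_zless[of "int (s - 1)" "int p"] by linarith
  ultimately have "Legendre (int (s - 1)) p = 1"
    using s_gt_1 Legendre_pm1[of "int p" "int (s - 1)"] by (auto simp: N_def)
  moreover have "int (s - 1) + 1 = int s"
    using s_gt_1 by simp
  ultimately show ?thesis
    unfolding sum_sign_pattern_def using sN Legendre_1[of "int p"] p_gt_2
    by (intro exI[of _ "int (s - 1)"] exI[of _ 1] exI[of _ "int s"]) (auto simp: N_def)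
qed

end

context
  fixes p :: nat
  assumes p_prime: "prime p" and p_ge_7: "7 \<le> p"
begin

private lemma p_gt_2: "2 < p"
  using p_ge_7 by simp

private lemmas Legendre_mult_p = Legendre_mult[OF p_prime p_gt_2]

text \<open>One of 1 + 1 = 2, 1 + 4 = 5, 1 + 9 = 10 consists of residues.\<close>
lemma sum_sign_pattern_res_res_res: "sum_sign_pattern p 1 1 1"
proof -
  have not_dvd: "\<not> int p dvd 2" "\<not> int p dvd 3" "\<not> int p dvd 5"
    using p_ge_7 zdvd_not_zless[of _ "int p"] by auto
  have L: "Legendre 1 p = 1" "Legendre 4 p = 1" "Legendre 9 p = 1"
    using Legendre_1[of "int p"] Legendre_square[OF p_prime p_gt_2] not_dvd p_ge_7 by force+
  consider "Legendre 2 p = 1" | "Legendre 5 p = 1" | "Legendre 10 p = 1"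
    using Legendre_pm1[OF not_dvd(1)] Legendre_pm1[OF not_dvd(3)] Legendre_mult_p[of 2 5] by auto
  then show ?thesis
  proof cases
    case 1
    then show ?thesis
      unfolding sum_sign_pattern_def using L by (intro exI[of _ 1] exI[of _ 1] exI[of _ 2]) simp
  next
    case 2
    then show ?thesis
      unfolding sum_sign_pattern_def using L by (intro exI[of _ 1] exI[of _ 4] exI[of _ 5]) simp
  next
    case 3
    then show ?thesis
      unfolding sum_sign_pattern_def using L by (intro exI[of _ 1] exI[of _ 9] exI[of _ 10]) simp
  qed
qed

lemma sum_sign_pattern_nonres_res_res: "sum_sign_pattern p (-1) 1 1"
proof (cases "Legendre (-1) p = 1")
  case True
  obtain u v w where uvw: "Legendre u p = 1" "Legendre v p = 1" "Legendre w p = -1"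
    "[u + v = w] (mod int p)"
    using sum_sign_pattern_res_res_nonres[OF p_prime p_gt_2] unfolding sum_sign_pattern_def by blast
  have "[(-w) + u = -v] (mod int p)"
    using uvw(4) by (simp add: cong_iff_dvd_diff algebra_simps)
  moreover have "Legendre (-w) p = -1" "Legendre (-v) p = 1"
    using Legendre_mult_p[of "-1" w] Legendre_mult_p[of "-1" v] True uvw by auto
  ultimately show ?thesis
    unfolding sum_sign_pattern_def using uvw(1) by blast
next
  case False
  then have "Legendre (-1) p = -1"
    using Legendre_pm1[of "int p" "-1"] prime_gt_1_nat[OF p_prime] by auto
  obtain u v w where uvw: "Legendre u p = 1" "Legendre v p = 1" "Legendre w p = 1"
    "[u + v = w] (mod int p)"
    using sum_sign_pattern_res_res_res unfolding sum_sign_pattern_def by blast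
  have "[(-v) + w = u] (mod int p)"
    using cong_add[OF cong_sym[OF uvw(4)] cong_refl[of "-v"]] by (simp add: algebra_simps)
  moreover have "Legendre (-v) p = -1"
    using Legendre_mult_p[of "-1" v] \<open>Legendre (-1) p = -1\<close> uvw by auto
  ultimately show ?thesis
    unfolding sum_sign_pattern_def using uvw(1,3) by blast
qed

lemma sum_sign_pattern_all:
  assumes "e1 \<in> {1, -1}" "e2 \<in> {1, -1}" "e3 \<in> {1, -1}"
  shows "sum_sign_pattern p e1 e2 e3"
proof -
  note base = sum_sign_pattern_res_res_res sum_sign_pattern_res_res_nonres[OF p_prime p_gt_2]
    sum_sign_pattern_nonres_res_res
  note negated = base[THEN sum_sign_pattern_neg[OF p_prime p_gt_2], simplified]
  note swapped = sum_sign_pattern_swap[OF base(3)] sum_sign_pattern_swap[OF negated(3)]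
  from assms show ?thesis
    by (elim insertE emptyE) (simp_all add: base negated swapped)
qed

lemma Legendre_avoid_zero:
  assumes "e \<in> {1, -1}" "\<not> int p dvd y"
  obtains w where "Legendre w p = e" "\<not> int p dvd s + w * y"
proof -
  obtain w where w: "Legendre w p = e"
    using Legendre_sign_exists[OF p_prime p_gt_2 assms(1)] .
  have not_dvd: "\<not> int p dvd 2" "\<not> int p dvd 3"
    using p_ge_7 zdvd_not_zless[of _ "int p"] by auto
  have "Legendre (4 * w) p = e"
    using w Legendre_mult_p[of 4 w] Legendre_square[OF p_prime p_gt_2 not_dvd(1)] by simp
  have "\<not> int p dvd w"
    using w assms(1) Legendre_eq_0_iff[of w "int p"] by auto
  txt \<open>The two candidates differ by 3 w y, which is prime to p.\<close>
  have "\<not> (int p dvd s + w * y \<and> int p dvd s + 4 * w * y)"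
  proof
    assume "int p dvd s + w * y \<and> int p dvd s + 4 * w * y"
    then have "int p dvd (s + 4 * w * y) - (s + w * y)"
      by (blast intro: dvd_diff)
    then have "int p dvd 3 * (w * y)"
      by (simp add: algebra_simps)
    then show False
      using not_dvd(2) \<open>\<not> int p dvd w\<close> assms(2) p_prime by (simp add: prime_dvd_mult_iff)
  qed
  then show ?thesis
    using that[of w] that[of "4 * w"] w \<open>Legendre (4 * w) p = e\<close> by blast
qed

lemma sum_with_signs:
  assumes "e1 \<in> {1, -1}" "e2 \<in> {1, -1}" "\<not> int p dvd t"
  obtains u v where "Legendre u p = e1" "Legendre v p = e2" "[u + v = t] (mod int p)"
proof -
  obtain u v w where uvw: "Legendre u p = e1" "Legendre v p = e2" "Legendre w p = Legendre t p"
    "[u + v = w] (mod int p)"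
    using sum_sign_pattern_all[OF assms(1,2) Legendre_pm1[OF assms(3)]]
    unfolding sum_sign_pattern_def by blast
  have "\<not> int p dvd w"
    using uvw(3) Legendre_pm1[OF assms(3)] Legendre_eq_0_iff[of w "int p"] by auto
  then obtain r where r: "[r * w = t] (mod int p)" "Legendre r p = Legendre t p * Legendre w p"
    using Legendre_divide[OF p_prime p_gt_2, where u = t] by blast
  have "Legendre r p = 1"
    using r(2) uvw(3) Legendre_pm1[OF assms(3)] by auto
  moreover have "[r * u + r * v = t] (mod int p)"
    using cong_trans[OF cong_scalar_left[OF uvw(4), of r] r(1)] by (simp add: distrib_left)
  ultimately show ?thesis
    using that[of "r * u" "r * v"] Legendre_mult_p uvw(1,2) by simp
qed

lemma weighted_sum_with_signs:
  assumes "e1 \<in> {1, -1}" "e2 \<in> {1, -1}"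
    and "\<not> int p dvd y1" "\<not> int p dvd y2" "\<not> int p dvd t"
  obtains w1 w2 where "Legendre w1 p = e1" "Legendre w2 p = e2"
    "[w1 * y1 + w2 * y2 = t] (mod int p)"
proof -
  have L: "Legendre y1 p \<in> {1, -1}" "Legendre y2 p \<in> {1, -1}"
    using Legendre_pm1 assms(3,4) by auto
  then have "e1 * Legendre y1 p \<in> {1, -1}" "e2 * Legendre y2 p \<in> {1, -1}"
    using assms(1,2) by auto
  then obtain u v where uv: "Legendre u p = e1 * Legendre y1 p" "Legendre v p = e2 * Legendre y2 p"
    "[u + v = t] (mod int p)"
    using sum_with_signs assms(5) by metis
  obtain w1 where w1: "[w1 * y1 = u] (mod int p)" "Legendre w1 p = Legendre u p * Legendre y1 p"
    using Legendre_divide[OF p_prime p_gt_2 assms(3)] .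
  obtain w2 where w2: "[w2 * y2 = v] (mod int p)" "Legendre w2 p = Legendre v p * Legendre y2 p"
    using Legendre_divide[OF p_prime p_gt_2 assms(4)] .
  have "Legendre w1 p = e1" "Legendre w2 p = e2"
    using w1(2) w2(2) uv(1,2) L by auto
  moreover have "[w1 * y1 + w2 * y2 = t] (mod int p)"
    using cong_trans[OF cong_add[OF w1(1) w2(1)] uv(3)] .
  ultimately show ?thesis
    using that by blast
qed

lemma zero_sum_with_signs:
  assumes "finite K" "3 \<le> card K" "\<forall>i\<in>K. \<not> int p dvd y i" "\<forall>i\<in>K. e i \<in> {1, -1}"
  obtains w where "\<forall>i\<in>K. Legendre (w i) p = e i" "int p dvd (\<Sum>i\<in>K. w i * y i)"
proof -
  obtain T where T: "T \<subseteq> K" "card T = 3"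
    using obtain_subset_with_card_n[OF assms(2)] by blast
  then obtain i1 i2 i3 where T_eq: "T = {i1, i2, i3}" and "i1 \<noteq> i2" "i2 \<noteq> i3" "i1 \<noteq> i3"
    by (auto simp: card_3_iff)
  then have i: "i1 \<in> K" "i2 \<in> K" "i3 \<in> K"
    using T(1) by auto
  obtain c where c: "\<forall>i\<in>K. Legendre (c i) p = e i"
    using Legendre_signs_exist[OF p_prime p_gt_2 assms(4)] .
  define s where "s = (\<Sum>i\<in>K - T. c i * y i)"
  obtain w3 where w3: "Legendre w3 p = e i3" "\<not> int p dvd s + w3 * y i3"
    using Legendre_avoid_zero assms(3,4) i(3) by metis
  moreover have "\<not> int p dvd - (s + w3 * y i3)"
    using w3(2) by (subst dvd_minus_iff)
  ultimately have "e i1 \<in> {1, -1}" "e i2 \<in> {1, -1}" "\<not> int p dvd y i1" "\<not> int p dvd y i2"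
    "\<not> int p dvd - (s + w3 * y i3)"
    using assms(3,4) i by auto
  then obtain w1 w2 where w12: "Legendre w1 p = e i1" "Legendre w2 p = e i2"
    "[w1 * y i1 + w2 * y i2 = - (s + w3 * y i3)] (mod int p)"
    by (rule weighted_sum_with_signs)
  define w where "w = c(i1 := w1, i2 := w2, i3 := w3)"
  have "\<forall>i\<in>K. Legendre (w i) p = e i"
    using c w12(1,2) w3(1) by (auto simp: w_def)
  moreover have "(\<Sum>i\<in>K. w i * y i) = w1 * y i1 + w2 * y i2 + (s + w3 * y i3)"
  proof -
    have "(\<Sum>i\<in>K. w i * y i) = (\<Sum>i\<in>T. w i * y i) + (\<Sum>i\<in>K - T. w i * y i)"
      using assms(1) T(1) by (metis add.commute sum.subset_diff)
    moreover have "(\<Sum>i\<in>K - T. w i * y i) = s"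
      unfolding s_def w_def using T_eq by (intro sum.cong) auto
    ultimately show ?thesis
      using T_eq \<open>i1 \<noteq> i2\<close> \<open>i2 \<noteq> i3\<close> \<open>i1 \<noteq> i3\<close> by (simp add: w_def)
  qed
  moreover have "int p dvd w1 * y i1 + w2 * y i2 + (s + w3 * y i3)"
    using w12(3) by (simp add: cong_iff_dvd_diff algebra_simps)
  ultimately show ?thesis
    using that by simp
qed

lemma local_zero_sum_with_signs:
  assumes "finite I" "3 \<le> card (nondvd_indices p xs I)" "\<forall>i\<in>I. e i \<in> {1, -1}"
  obtains w where "\<forall>i\<in>I. Legendre (w i) p = e i" "int p dvd (\<Sum>i\<in>I. w i * xs ! i)"
proof -
  let ?N = "nondvd_indices p xs I"
  have "finite ?N" "3 \<le> card ?N" "\<forall>i\<in>?N. \<not> int p dvd xs ! i" "\<forall>i\<in>?N. e i \<in> {1, -1}"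
    using assms by (auto simp: nondvd_indices_def)
  then obtain v where v: "\<forall>i\<in>?N. Legendre (v i) p = e i" "int p dvd (\<Sum>i\<in>?N. v i * xs ! i)"
    by (rule zero_sum_with_signs)
  obtain c where c: "\<forall>i\<in>I. Legendre (c i) p = e i"
    using Legendre_signs_exist[OF p_prime p_gt_2 assms(3)] .
  define w where "w i = (if i \<in> ?N then v i else c i)" for i
  have "(\<Sum>i\<in>?N. w i * xs ! i) = (\<Sum>i\<in>?N. v i * xs ! i)"
    by (intro sum.cong) (simp_all add: w_def)
  then have "int p dvd (\<Sum>i\<in>I. w i * xs ! i)"
    using dvd_weighted_sum_iff_nondvd_indices[OF assms(1)] v(2) by simp
  moreover have "\<forall>i\<in>I. Legendre (w i) p = e i"
    using v(1) c by (simp add: w_def)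
  ultimately show ?thesis
    using that by blast
qed

lemma local_zero_sum:
  assumes "finite I" "card (nondvd_indices p xs I) \<noteq> 1"
  obtains w where "\<forall>i\<in>I. \<not> int p dvd w i" "int p dvd (\<Sum>i\<in>I. w i * xs ! i)"
    "u \<in> nondvd_indices p xs I \<longrightarrow> Legendre (w u) p = 1"
proof -
  let ?N = "nondvd_indices p xs I"
  have not_dvd_1: "\<not> int p dvd 1" and prime_p: "prime (int p)"
    using p_ge_7 p_prime zdvd_not_zless[of 1 "int p"] by simp_all
  have fin: "finite ?N"
    using assms(1) by (simp add: nondvd_indices_def)
  have "card ?N = 0 \<or> card ?N = 2 \<or> 3 \<le> card ?N"
    using assms(2) by linarith
  then consider "?N = {}" | "card ?N = 2" | "3 \<le> card ?N"
    using fin by auto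
  then show ?thesis
  proof cases
    case 1
    show ?thesis
    proof (rule that[of "\<lambda>_. 1"])
      show "\<forall>i\<in>I. \<not> int p dvd 1"
        using not_dvd_1 by blast
      have "(\<Sum>i\<in>?N. 1 * xs ! i) = 0"
        by (simp only: 1 sum.empty)
      then show "int p dvd (\<Sum>i\<in>I. 1 * xs ! i)"
        using dvd_weighted_sum_iff_nondvd_indices[OF assms(1), of p "\<lambda>_. 1" xs]
        by (simp only: dvd_0_right)
      show "u \<in> ?N \<longrightarrow> Legendre 1 p = 1"
        using 1 by blast
    qed
  next
    case 2
    txt \<open>The weights x_b^2 and -x_a x_b cancel the terms x_a and x_b; only the first is
      known to be a residue, so b is chosen different from u.\<close>
    then obtain a0 b0 where ab0: "?N = {a0, b0}" "a0 \<noteq> b0"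
      by (auto simp: card_2_iff)
    obtain a b where N: "?N = {a, b}" "a \<noteq> b" "b \<noteq> u"
    proof (cases "b0 = u")
      case True
      then show ?thesis
        using that[of b0 a0] ab0 by (simp add: insert_commute)
    next
      case False
      then show ?thesis
        using that[of a0 b0] ab0 by simp
    qed
    then have a: "a \<in> I" "\<not> int p dvd xs ! a" and b: "b \<in> I" "\<not> int p dvd xs ! b"
      by (auto simp: nondvd_indices_def)
    define w where "w = (\<lambda>_. 1)(a := xs ! b * xs ! b, b := - (xs ! a * xs ! b))"
    have w_units: "\<forall>i\<in>I. \<not> int p dvd w i"
      using a(2) b(2) not_dvd_1 prime_p by (auto simp: w_def prime_dvd_mult_iff)
    have "(\<Sum>i\<in>?N. w i * xs ! i) = 0"
      using N(1,2) by (simp add: w_def algebra_simps)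
    then have w_sum: "int p dvd (\<Sum>i\<in>I. w i * xs ! i)"
      using dvd_weighted_sum_iff_nondvd_indices[OF assms(1)] by simp
    have "Legendre (xs ! b * xs ! b) p = 1"
      using Legendre_square[OF p_prime _ b(2)] p_ge_7 by simp
    then have "u \<in> ?N \<longrightarrow> Legendre (w u) p = 1"
      using N by (auto simp: w_def)
    then show ?thesis
      using that w_units w_sum by blast
  next
    case 3
    have "\<forall>i\<in>I. (1::int) \<in> {1, -1}"
      by simp
    with local_zero_sum_with_signs[OF assms(1) 3, where e = "\<lambda>_. 1"]
    obtain w where w: "\<forall>i\<in>I. Legendre (w i) p = 1" "int p dvd (\<Sum>i\<in>I. w i * xs ! i)"
      by blast
    have "\<forall>i\<in>I. \<not> int p dvd w i"
      using w(1) by (auto simp flip: Legendre_eq_0_iff)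
    moreover have "u \<in> ?N \<longrightarrow> Legendre (w u) p = 1"
      using w(1) by (simp add: nondvd_indices_def)
    ultimately show ?thesis
      using that w(2) by blast
  qed
qed

end

section \<open>Gluing local weights\<close>

lemma squarefree_nat_neq_0: "squarefree (m::nat) \<Longrightarrow> m \<noteq> 0"
  by (cases "m = 0") simp_all

lemma gt_1_if_prime_factors_ne_empty:
  assumes "prime_factors (m::nat) \<noteq> {}"
  shows "m > 1"
proof -
  obtain p where p: "p \<in> prime_factors m"
    using assms by blast
  then have "m \<noteq> 0"
    by (cases "m = 0") auto
  then have "p \<le> m"
    using p by (auto intro: dvd_imp_le)
  moreover have "p > 1"
    using prime_gt_1_nat[OF in_prime_factors_imp_prime[OF p]] .
  ultimately show ?thesis
    by simp
qed

lemma squarefree_multiplicity: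
  assumes "squarefree (m::nat)" "p \<in> prime_factors m"
  shows "multiplicity p m = 1"
  using assms squarefree_factorial_semiring'[of m] by (cases "m = 0") auto

lemma Jacobi_squarefree:
  assumes "squarefree m"
  shows "Jacobi a m = (\<Prod>p\<in>prime_factors m. Legendre a (int p))"
  unfolding Jacobi_def using squarefree_multiplicity[OF assms] by (intro prod.cong) auto

lemma squarefree_dvdI:
  assumes "squarefree (m::nat)" "\<forall>p\<in>prime_factors m. p dvd z"
  shows "m dvd z"
proof (cases "z = 0")
  case False
  have "m \<noteq> 0"
    using assms(1) by (rule squarefree_nat_neq_0)
  then show ?thesis
  proof (rule multiplicity_le_imp_dvd)
    fix q :: nat
    assume "prime q"
    show "multiplicity q m \<le> multiplicity q z"
    proof (cases "q \<in> prime_factors m")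
      case True
      then have "q dvd z"
        using assms(2) by blast
      then show ?thesis
        using squarefree_multiplicity[OF assms(1) True] \<open>prime q\<close> False
        by (simp add: Suc_le_eq prime_multiplicity_gt_zero_iff)
    next
      case False
      then show ?thesis
        using \<open>prime q\<close> \<open>m \<noteq> 0\<close> by (simp add: in_prime_factors_iff not_dvd_imp_multiplicity_0)
    qed
  qed
qed simp

lemma squarefree_int_dvdI:
  assumes "squarefree (m::nat)" "\<forall>p\<in>prime_factors m. int p dvd z"
  shows "int m dvd z"
proof -
  have "m dvd nat \<bar>z\<bar>"
    using assms by (intro squarefree_dvdI) auto
  then show ?thesis
    by simp
qed

lemma coprime_iff_prime_factors_not_dvd:
  assumes "m \<noteq> 0"
  shows "coprime a (int m) \<longleftrightarrow> (\<forall>p\<in>prime_factors m. \<not> int p dvd a)"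
proof
  assume "coprime a (int m)"
  then show "\<forall>p\<in>prime_factors m. \<not> int p dvd a"
    by (auto simp: in_prime_factors_iff dest: coprime_common_divisor)
next
  assume no_dvd: "\<forall>p\<in>prime_factors m. \<not> int p dvd a"
  show "coprime a (int m)"
  proof (rule ccontr)
    assume "\<not> coprime a (int m)"
    then obtain q where q: "prime q" "q dvd a" "q dvd int m"
      using assms prime_divisor_exists[of "gcd a (int m)"] by (auto simp: coprime_iff_gcd_eq_1)
    then have "int (nat q) = q"
      by (simp add: prime_ge_0_int)
    then have "nat q dvd m"
      using q(3) by (metis int_dvd_int_iff)
    then have "nat q \<in> prime_factors m" "int (nat q) dvd a"
      using q assms \<open>int (nat q) = q\<close> by (auto simp: in_prime_factors_iff)
    then show False
      using no_dvd by blast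
  qed
qed

lemma unit_with_local_residues:
  assumes "squarefree (m::nat)" "\<forall>p\<in>prime_factors m. \<not> int p dvd f p"
  obtains a where "a \<in> Uset m" "\<forall>p\<in>prime_factors m. [a = f p] (mod int p)"
    "Jacobi a m = (\<Prod>p\<in>prime_factors m. Legendre (f p) (int p))"
proof -
  let ?P = "prime_factors m"
  have m0: "m \<noteq> 0"
    using assms(1) by (rule squarefree_nat_neq_0)
  have "\<forall>i\<in>?P. \<forall>j\<in>?P. i \<noteq> j \<longrightarrow> coprime (id i) (id j)"
    by (auto intro: primes_coprime)
  then obtain x where x: "\<forall>p\<in>?P. [x = nat (f p mod int p)] (mod id p)"
    using chinese_remainder_nat[where u = "\<lambda>p. nat (f p mod int p)"] by blast
  define a where "a = int x mod int m"
  have a_cong: "\<forall>p\<in>?P. [a = f p] (mod int p)"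
  proof
    fix p assume p: "p \<in> ?P"
    then have "int p dvd int m" "int p > 0"
      by (auto simp: in_prime_factors_iff prime_gt_0_nat)
    then have "[a = int x] (mod int p)"
      unfolding a_def by (simp add: cong_def mod_mod_cancel)
    also have "[int x = int (nat (f p mod int p))] (mod int p)"
      using x p by (simp only: cong_int_iff id_apply)
    also have "int (nat (f p mod int p)) = f p mod int p"
      using \<open>int p > 0\<close> by simp
    also have "[f p mod int p = f p] (mod int p)"
      by (simp add: cong_def)
    finally show "[a = f p] (mod int p)" .
  qed
  then have "\<forall>p\<in>?P. \<not> int p dvd a"
    using assms(2) cong_dvd_iff by blast
  then have "a \<in> Uset m"
    using coprime_iff_prime_factors_not_dvd[OF m0] m0 by (simp add: Uset_def a_def)
  moreover have "Jacobi a m = (\<Prod>p\<in>?P. Legendre (f p) (int p))"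
    unfolding Jacobi_squarefree[OF assms(1)] using a_cong by (intro prod.cong) (auto intro: Legendre_cong)
  ultimately show ?thesis
    using that a_cong by blast
qed

lemma has_wzs_Sset_of_local_weights:
  assumes sf: "squarefree m" and I: "I \<noteq> {}" "I \<subseteq> {..<length xs}"
    and units: "\<forall>p\<in>prime_factors m. \<forall>i\<in>I. \<not> int p dvd W p i"
    and sums: "\<forall>p\<in>prime_factors m. int p dvd (\<Sum>i\<in>I. W p i * xs ! i)"
    and signs: "\<forall>i\<in>I. (\<Prod>p\<in>prime_factors m. Legendre (W p i) (int p)) = 1"
  shows "has_wzs (Sset m) m xs"
proof -
  have "\<forall>i\<in>I. \<exists>a. a \<in> Uset m \<and> (\<forall>p\<in>prime_factors m. [a = W p i] (mod int p))
           \<and> Jacobi a m = (\<Prod>p\<in>prime_factors m. Legendre (W p i) (int p))"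
  proof
    fix i assume "i \<in> I"
    then have "\<forall>p\<in>prime_factors m. \<not> int p dvd W p i"
      using units by blast
    from unit_with_local_residues[OF sf this]
    show "\<exists>a. a \<in> Uset m \<and> (\<forall>p\<in>prime_factors m. [a = W p i] (mod int p))
           \<and> Jacobi a m = (\<Prod>p\<in>prime_factors m. Legendre (W p i) (int p))"
      by blast
  qed
  from bchoice[OF this] obtain a where a: "\<forall>i\<in>I. a i \<in> Uset m \<and>
      (\<forall>p\<in>prime_factors m. [a i = W p i] (mod int p)) \<and>
      Jacobi (a i) m = (\<Prod>p\<in>prime_factors m. Legendre (W p i) (int p))"
    by blast
  have "\<forall>p\<in>prime_factors m. int p dvd (\<Sum>i\<in>I. a i * xs ! i)"
  proof
    fix p assume p: "p \<in> prime_factors m"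
    have "[(\<Sum>i\<in>I. a i * xs ! i) = (\<Sum>i\<in>I. W p i * xs ! i)] (mod int p)"
      using a p by (intro cong_sum cong_scalar_right) auto
    then show "int p dvd (\<Sum>i\<in>I. a i * xs ! i)"
      using sums p cong_dvd_iff by blast
  qed
  then have "(\<Sum>i\<in>I. a i * xs ! i) mod int m = 0"
    using squarefree_int_dvdI[OF sf] by simp
  moreover have "\<forall>i\<in>I. a i \<in> Sset m"
    using a signs by (simp add: Sset_def)
  ultimately show ?thesis
    unfolding has_wzs_def using I by (intro exI[of _ I] exI[of _ a]) auto
qed

lemma prod_pm1:
  fixes f :: "'a \<Rightarrow> int"
  shows "\<forall>x\<in>A. f x \<in> {1, -1} \<Longrightarrow> prod f A \<in> {1, -1}"
  by (induction A rule: infinite_finite_induct) auto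

lemma prod_eq_1_by_correction:
  fixes f :: "'a \<Rightarrow> int"
  assumes "finite A" "q \<in> A" "f q = (\<Prod>x\<in>A - {q}. f x)" "f q \<in> {1, -1}"
  shows "prod f A = 1"
  using prod.remove[OF assms(1,2), of f] assms(3,4) by auto

lemma local_zero_sums:
  assumes "\<forall>p\<in>prime_factors m. 7 \<le> p" "finite I"
    and "\<forall>p\<in>prime_factors m. card (nondvd_indices p xs I) \<noteq> 1"
  shows "\<exists>w. (\<forall>p\<in>prime_factors m. \<forall>i\<in>I. \<not> int p dvd w p i)
    \<and> (\<forall>p\<in>prime_factors m. int p dvd (\<Sum>i\<in>I. w p i * xs ! i))
    \<and> (\<forall>p\<in>prime_factors m. u \<in> nondvd_indices p xs I \<longrightarrow> Legendre (w p u) (int p) = 1)"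
proof -
  have "\<forall>p\<in>prime_factors m. \<exists>w. (\<forall>i\<in>I. \<not> int p dvd w i) \<and> int p dvd (\<Sum>i\<in>I. w i * xs ! i)
          \<and> (u \<in> nondvd_indices p xs I \<longrightarrow> Legendre (w u) (int p) = 1)"
  proof
    fix p assume p: "p \<in> prime_factors m"
    then have "prime p" "7 \<le> p" "card (nondvd_indices p xs I) \<noteq> 1"
      using assms by auto
    from local_zero_sum[OF this(1,2) assms(2) this(3)] show "\<exists>w. (\<forall>i\<in>I. \<not> int p dvd w i)
        \<and> int p dvd (\<Sum>i\<in>I. w i * xs ! i) \<and> (u \<in> nondvd_indices p xs I \<longrightarrow> Legendre (w u) (int p) = 1)"
      by blast
  qed
  from bchoice[OF this] show ?thesis
    by blast
qed

lemma has_wzs_Sset_of_rich_prime: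
  assumes sf: "squarefree m" and ge7: "\<forall>p\<in>prime_factors m. 7 \<le> p"
    and I: "I \<noteq> {}" "I \<subseteq> {..<length xs}"
    and no_single: "\<forall>p\<in>prime_factors m. card (nondvd_indices p xs I) \<noteq> 1"
    and q: "q \<in> prime_factors m" "3 \<le> card (nondvd_indices q xs I)"
  shows "has_wzs (Sset m) m xs"
proof -
  let ?P = "prime_factors m"
  have fin: "finite I"
    using I(2) finite_subset by blast
  obtain w where w: "\<forall>p\<in>?P. \<forall>i\<in>I. \<not> int p dvd w p i" "\<forall>p\<in>?P. int p dvd (\<Sum>i\<in>I. w p i * xs ! i)"
    using local_zero_sums[OF ge7 fin no_single] by blast
  define E where "E i = (\<Prod>p\<in>?P - {q}. Legendre (w p i) (int p))" for i
  have E: "\<forall>i\<in>I. E i \<in> {1, -1}"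
    unfolding E_def using w(1) by (intro ballI prod_pm1 Legendre_pm1) auto
  txt \<open>At q the quadratic characters of the weights can be prescribed, so they can be chosen to
    make every Jacobi symbol equal to 1.\<close>
  have "prime q" "7 \<le> q"
    using q(1) ge7 by auto
  from local_zero_sum_with_signs[OF this fin q(2) E]
  obtain v where v: "\<forall>i\<in>I. Legendre (v i) q = E i" "int q dvd (\<Sum>i\<in>I. v i * xs ! i)" .
  define W where "W p = (if p = q then v else w p)" for p
  show ?thesis
  proof (rule has_wzs_Sset_of_local_weights[OF sf I, of W])
    have "\<forall>i\<in>I. \<not> int q dvd v i"
      using v(1) E by (auto simp flip: Legendre_eq_0_iff)
    then show "\<forall>p\<in>?P. \<forall>i\<in>I. \<not> int p dvd W p i"
      using w(1) by (simp add: W_def)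
    show "\<forall>p\<in>?P. int p dvd (\<Sum>i\<in>I. W p i * xs ! i)"
      using w(2) v(2) by (simp add: W_def)
    show "\<forall>i\<in>I. (\<Prod>p\<in>?P. Legendre (W p i) (int p)) = 1"
    proof
      fix i assume i: "i \<in> I"
      have "(\<Prod>p\<in>?P - {q}. Legendre (W p i) (int p)) = E i"
        unfolding E_def W_def by (intro prod.cong) auto
      moreover have "Legendre (W q i) q = E i"
        using v(1) i by (simp add: W_def)
      ultimately show "(\<Prod>p\<in>?P. Legendre (W p i) (int p)) = 1"
        using E i q(1) by (intro prod_eq_1_by_correction) auto
    qed
  qed
qed

lemma has_wzs_Sset_of_unique_unit:
  assumes sf: "squarefree m" and ge7: "\<forall>p\<in>prime_factors m. 7 \<le> p"
    and I: "I \<noteq> {}" "I \<subseteq> {..<length xs}"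
    and no_single: "\<forall>p\<in>prime_factors m. card (nondvd_indices p xs I) \<noteq> 1"
    and unique: "\<forall>i\<in>I. \<forall>j\<in>I. coprime (xs ! i) (int m) \<longrightarrow> coprime (xs ! j) (int m) \<longrightarrow> i = j"
  shows "has_wzs (Sset m) m xs"
proof -
  let ?P = "prime_factors m"
  let ?unit = "\<lambda>i. coprime (xs ! i) (int m)"
  have m0: "m \<noteq> 0" and fin: "finite I"
    using sf I(2) finite_subset by (auto intro: ccontr)
  obtain u where u: "\<forall>i\<in>I. ?unit i \<longrightarrow> i = u"
    using unique by blast
  obtain w where w: "\<forall>p\<in>?P. \<forall>i\<in>I. \<not> int p dvd w p i" "\<forall>p\<in>?P. int p dvd (\<Sum>i\<in>I. w p i * xs ! i)"
    "\<forall>p\<in>?P. u \<in> nondvd_indices p xs I \<longrightarrow> Legendre (w p u) (int p) = 1"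
    using local_zero_sums[OF ge7 fin no_single] by blast
  txt \<open>A prime d i dividing a non-unit term x_i sees no contribution from x_i, so there the
    weight of x_i is free and corrects its Jacobi symbol.\<close>
  have "\<forall>i. \<exists>q. \<not> ?unit i \<longrightarrow> q \<in> ?P \<and> int q dvd xs ! i"
    using coprime_iff_prime_factors_not_dvd[OF m0] by blast
  then obtain d where d: "\<forall>i. \<not> ?unit i \<longrightarrow> d i \<in> ?P \<and> int (d i) dvd xs ! i"
    by metis
  have "\<forall>p\<in>?P. prime p \<and> 2 < p"
    using ge7 by fastforce
  then obtain r where r: "\<forall>p\<in>?P. \<forall>e\<in>{1, -1}. Legendre (r p e) (int p) = e"
    by (rule Legendre_sign_representatives)
  define E where "E i = (\<Prod>p\<in>?P - {d i}. Legendre (w p i) (int p))" for i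
  have E: "\<forall>i\<in>I. E i \<in> {1, -1}"
    unfolding E_def using w(1) by (intro ballI prod_pm1 Legendre_pm1) auto
  define W where "W p i = (if \<not> ?unit i \<and> p = d i then r p (E i) else w p i)" for p i
  have W_d: "Legendre (W (d i) i) (d i) = E i" if "i \<in> I" "\<not> ?unit i" for i
  proof -
    have "d i \<in> ?P" "E i \<in> {1, -1}"
      using d E that by auto
    then show ?thesis
      using r that(2) by (auto simp: W_def)
  qed
  show ?thesis
  proof (rule has_wzs_Sset_of_local_weights[OF sf I, of W])
    show "\<forall>p\<in>?P. \<forall>i\<in>I. \<not> int p dvd W p i"
    proof (intro ballI)
      fix p i assume "p \<in> ?P" "i \<in> I"
      then show "\<not> int p dvd W p i"
        using w(1) W_d E by (cases "\<not> ?unit i \<and> p = d i") (auto simp: W_def simp flip: Legendre_eq_0_iff)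
    qed
    show "\<forall>p\<in>?P. int p dvd (\<Sum>i\<in>I. W p i * xs ! i)"
    proof
      fix p assume p: "p \<in> ?P"
      have "\<forall>i\<in>nondvd_indices p xs I. W p i = w p i"
        using d by (auto simp: W_def nondvd_indices_def)
      then show "int p dvd (\<Sum>i\<in>I. W p i * xs ! i)"
        using w(2) p dvd_weighted_sum_cong_nondvd_indices[OF fin] by blast
    qed
    show "\<forall>i\<in>I. (\<Prod>p\<in>?P. Legendre (W p i) (int p)) = 1"
    proof
      fix i assume i: "i \<in> I"
      show "(\<Prod>p\<in>?P. Legendre (W p i) (int p)) = 1"
      proof (cases "?unit i")
        case True
        then have "\<forall>p\<in>?P. u \<in> nondvd_indices p xs I"
          using u i coprime_iff_prime_factors_not_dvd[OF m0] by (auto simp: nondvd_indices_def)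
        then show ?thesis
          using w(3) u i True by (simp add: W_def)
      next
        case False
        have "(\<Prod>p\<in>?P - {d i}. Legendre (W p i) (int p)) = E i"
          unfolding E_def W_def by (intro prod.cong) auto
        then show ?thesis
          using W_d[OF i False] E i d False by (intro prod_eq_1_by_correction) auto
      qed
    qed
  qed
qed

section \<open>The Davenport constants of S(n) and U(n)\<close>

lemma Sset_subset_Uset: "Sset m \<subseteq> Uset m"
  by (auto simp: Sset_def)

lemma one_in_Uset: "m > 1 \<Longrightarrow> 1 \<in> Uset m"
  by (simp add: Uset_def)

lemma one_in_Sset:
  assumes "squarefree m" "m > 1"
  shows "1 \<in> Sset m"
proof -
  have "Jacobi 1 m = 1"
    unfolding Jacobi_squarefree[OF assms(1)]
    by (intro prod.neutral ballI Legendre_1)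
      (metis in_prime_factors_imp_prime of_nat_1 of_nat_less_iff prime_gt_1_nat)
  then show ?thesis
    using one_in_Uset[OF assms(2)] by (simp add: Sset_def)
qed

lemma has_wzs_mono:
  assumes "A \<subseteq> B" "has_wzs A m xs"
  shows "has_wzs B m xs"
proof -
  obtain I a where "I \<noteq> {}" "I \<subseteq> {..<length xs}" "\<forall>i\<in>I. a i \<in> A"
    "(\<Sum>i\<in>I. a i * xs ! i) mod int m = 0"
    using assms(2) unfolding has_wzs_def by (elim exE conjE)
  then show ?thesis
    unfolding has_wzs_def using assms(1) by (intro exI[of _ I] exI[of _ a]) auto
qed

lemma has_wzs_of_zero_term:
  assumes "1 \<in> A" "l < length xs" "xs ! l mod int m = 0"
  shows "has_wzs A m xs"
  unfolding has_wzs_def using assms by (intro exI[of _ "{l}"] exI[of _ "\<lambda>_. 1"]) auto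

lemma is_seq_nth: "is_seq m xs \<Longrightarrow> l < length xs \<Longrightarrow> 0 \<le> xs ! l \<and> xs ! l < int m"
  unfolding is_seq_def using nth_mem by fastforce

lemma prime_factor_not_dvd_residue:
  assumes "squarefree m" "0 \<le> x" "x < int m" "x \<noteq> 0"
  shows "\<exists>p\<in>prime_factors m. \<not> int p dvd x"
proof -
  have "\<not> int m dvd x"
    using assms(2-4) zdvd_not_zless by fastforce
  then show ?thesis
    using squarefree_int_dvdI[OF assms(1)] by blast
qed

lemma prime_factor_dvd_div_other:
  assumes "p \<in> prime_factors m" "q \<in> prime_factors m" "p \<noteq> q"
  shows "p dvd m div q"
proof -
  have "p dvd q * (m div q)"
    using assms(1,2) by (metis in_prime_factors_imp_dvd dvd_mult_div_cancel)
  moreover have "\<not> p dvd q"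
    using primes_dvd_imp_eq[OF in_prime_factors_imp_prime[OF assms(1)] in_prime_factors_imp_prime[OF assms(2)]]
      assms(3) by blast
  ultimately show ?thesis
    using in_prime_factors_imp_prime[OF assms(1)] by (simp add: prime_dvd_mult_iff)
qed

lemma prime_factor_not_dvd_div_self:
  assumes "squarefree m" "p \<in> prime_factors m"
  shows "\<not> p dvd m div p"
proof
  assume "p dvd m div p"
  then have "p * p dvd p * (m div p)"
    by (rule mult_dvd_mono[OF dvd_refl])
  moreover have "p * (m div p) = m"
    using assms(2) by auto
  ultimately have "p ^ 2 dvd m"
    by (simp add: power2_eq_square)
  then have "p dvd 1"
    by (rule squarefreeD[OF assms(1)])
  then show False
    using in_prime_factors_imp_prime[OF assms(2)] by simp
qed

lemma prime_factors_div_self: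
  assumes "squarefree (m::nat)" "p \<in> prime_factors m"
  shows "prime_factors (m div p) = prime_factors m - {p}"
proof -
  have "p * (m div p) = m"
    using assms(2) by auto
  moreover have "m \<noteq> 0"
    using assms(1) by (rule squarefree_nat_neq_0)
  ultimately have "m div p dvd m" "m div p \<noteq> 0" "m \<noteq> 0"
    by (metis dvd_triv_right, metis mult_0_right, simp)
  show ?thesis
  proof (intro equalityI subsetI)
    fix q assume "q \<in> prime_factors (m div p)"
    then have "prime q" "q dvd m div p"
      by auto
    then have "q \<in> prime_factors m" "q \<noteq> p"
      using \<open>m div p dvd m\<close> \<open>m \<noteq> 0\<close> prime_factor_not_dvd_div_self[OF assms]
      by (auto simp: in_prime_factors_iff intro: dvd_trans)
    then show "q \<in> prime_factors m - {p}"
      by simp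
  next
    fix q assume "q \<in> prime_factors m - {p}"
    then show "q \<in> prime_factors (m div p)"
      using prime_factor_dvd_div_other[OF _ assms(2)] \<open>m div p \<noteq> 0\<close>
      by (auto simp: in_prime_factors_iff)
  qed
qed

text \<open>The weights are units, so a term that is alone in not being divisible by some p
  cannot be cancelled modulo p.\<close>
lemma has_wzs_imp_no_single_nondvd:
  assumes "A \<subseteq> Uset m" "has_wzs A m xs"
  obtains I where "I \<noteq> {}" "I \<subseteq> {..<length xs}"
    "\<forall>p\<in>prime_factors m. card (nondvd_indices p xs I) \<noteq> 1"
proof -
  obtain I a where I: "I \<noteq> {}" "I \<subseteq> {..<length xs}" and a: "\<forall>i\<in>I. a i \<in> A"
    and sum: "(\<Sum>i\<in>I. a i * xs ! i) mod int m = 0"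
    using assms(2) unfolding has_wzs_def by (elim exE conjE)
  have "card (nondvd_indices p xs I) \<noteq> 1" if p: "p \<in> prime_factors m" for p
  proof
    assume "card (nondvd_indices p xs I) = 1"
    then obtain j where j: "nondvd_indices p xs I = {j}"
      using card_1_singletonE by blast
    then have "j \<in> I" "\<not> int p dvd xs ! j"
      by (auto simp: nondvd_indices_def)
    have "int p dvd int m"
      using p by auto
    moreover have "int m dvd (\<Sum>i\<in>I. a i * xs ! i)"
      using sum by (simp add: dvd_eq_mod_eq_0)
    ultimately have "int p dvd (\<Sum>i\<in>I. a i * xs ! i)"
      by (rule dvd_trans)
    then have dvd_j: "int p dvd a j * xs ! j"
      using dvd_weighted_sum_iff_nondvd_indices[of I p a xs] I(2) j finite_subset by auto
    have "coprime (a j) (int m)"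
      using a assms(1) \<open>j \<in> I\<close> by (auto simp: Uset_def)
    moreover have "m \<noteq> 0"
      using p by (cases "m = 0") auto
    ultimately have "\<not> int p dvd a j"
      using coprime_iff_prime_factors_not_dvd p by blast
    moreover have "prime (int p)"
      using p by auto
    ultimately show False
      using dvd_j \<open>\<not> int p dvd xs ! j\<close> by (simp add: prime_dvd_mult_iff)
  qed
  then show ?thesis
    using that I by blast
qed

lemma nondvd_indices_cofactors:
  assumes sf: "squarefree m" and ps: "distinct ps" "set ps \<subseteq> prime_factors m"
    and I: "I \<subseteq> {..<length ps}" "i \<in> I"
  shows "nondvd_indices (ps ! i) (map (\<lambda>p. int (m div p)) ps) I = {i}"
proof -
  have P: "ps ! k \<in> prime_factors m" if "k < length ps" for k
    using ps(2) that nth_mem by blast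
  have "k = i" if "k \<in> nondvd_indices (ps ! i) (map (\<lambda>p. int (m div p)) ps) I" for k
  proof (rule ccontr)
    assume "k \<noteq> i"
    moreover have "k < length ps" "i < length ps" "\<not> ps ! i dvd m div ps ! k"
      using that I by (auto simp: nondvd_indices_def)
    ultimately show False
      using ps(1) P prime_factor_dvd_div_other[of "ps ! i" m "ps ! k"] by (simp add: nth_eq_iff_index_eq)
  qed
  moreover have "i \<in> nondvd_indices (ps ! i) (map (\<lambda>p. int (m div p)) ps) I"
    using I P prime_factor_not_dvd_div_self[OF sf] by (auto simp: nondvd_indices_def)
  ultimately show ?thesis
    by blast
qed

lemma zero_sum_free_seq_exists:
  assumes sf: "squarefree m" and "A \<subseteq> Uset m" and j: "j \<le> card (prime_factors m)"
  obtains xs where "length xs = j" "is_seq m xs" "\<not> has_wzs A m xs"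
proof -
  obtain S where S: "S \<subseteq> prime_factors m" "card S = j" "finite S"
    using obtain_subset_with_card_n[OF j] .
  define ps where "ps = sorted_list_of_set S"
  have ps: "distinct ps" "set ps \<subseteq> prime_factors m" "length ps = j"
    using S by (auto simp: ps_def)
  define xs where "xs = map (\<lambda>p. int (m div p)) ps"
  have len: "length xs = j"
    using ps(3) by (simp add: xs_def)
  have "m > 0"
    using squarefree_nat_neq_0[OF sf] by simp
  then have "is_seq m xs"
    using ps(2) by (auto simp: is_seq_def xs_def intro!: div_less_dividend prime_gt_1_nat
      in_prime_factors_imp_prime)
  moreover have "\<not> has_wzs A m xs"
  proof
    assume "has_wzs A m xs"
    then obtain I where I: "I \<noteq> {}" "I \<subseteq> {..<length xs}"
      "\<forall>p\<in>prime_factors m. card (nondvd_indices p xs I) \<noteq> 1"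
      by (rule has_wzs_imp_no_single_nondvd[OF assms(2)])
    then obtain i where "i \<in> I"
      by blast
    moreover have "i < length ps"
      using \<open>i \<in> I\<close> I(2) len ps(3) by auto
    ultimately have "nondvd_indices (ps ! i) xs I = {i}" "ps ! i \<in> prime_factors m"
      using nondvd_indices_cofactors[OF sf ps(1,2)] I(2) ps(2) nth_mem by (auto simp: xs_def)
    then show False
      using I(3) by fastforce
  qed
  ultimately show ?thesis
    using that len by blast
qed

text \<open>Pigeonhole on the parity vectors of the subsets of indices: the symmetric difference of
  two subsets with the same parity vector has an even number of terms prime to each p.\<close>
lemma even_nondvd_subset_exists:
  assumes "finite P" "length xs > card P"
  obtains I where "I \<noteq> {}" "I \<subseteq> {..<length xs}"
    "\<forall>p\<in>P. even (card (nondvd_indices p xs I))"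
proof -
  let ?L = "length xs"
  define f where "f I = {p\<in>P. odd (card (nondvd_indices p xs I))}" for I
  have "\<not> inj_on f (Pow {..<?L})"
  proof
    assume "inj_on f (Pow {..<?L})"
    then have "card (Pow {..<?L}) \<le> card (Pow P)"
      using assms(1) by (intro card_inj_on_le) (auto simp: f_def)
    then show False
      using assms by (simp add: card_Pow)
  qed
  then obtain J K where JK: "J \<subseteq> {..<?L}" "K \<subseteq> {..<?L}" "J \<noteq> K" "f J = f K"
    unfolding inj_on_def by blast
  define I where "I = (J - K) \<union> (K - J)"
  have "even (card (nondvd_indices p xs I))" if "p \<in> P" for p
  proof -
    let ?A = "nondvd_indices p xs J" and ?B = "nondvd_indices p xs K"
    have "finite J" "finite K"
      using JK(1,2) finite_subset by blast+
    then have fin: "finite ?A" "finite ?B"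
      by (simp_all add: nondvd_indices_def)
    have "nondvd_indices p xs I = (?A - ?B) \<union> (?B - ?A)"
      by (auto simp: I_def nondvd_indices_def)
    then have "card (nondvd_indices p xs I) = card (?A - ?B) + card (?B - ?A)"
      using fin by (simp only:) (intro card_Un_disjoint; auto)
    moreover have "card ?A = card (?A \<inter> ?B) + card (?A - ?B)"
      "card ?B = card (?A \<inter> ?B) + card (?B - ?A)"
      using card_Int_Diff[OF fin(1), of ?B] card_Int_Diff[OF fin(2), of ?A] by (simp_all add: Int_commute)
    moreover have "odd (card ?A) \<longleftrightarrow> odd (card ?B)"
      using JK(4) that unfolding f_def by blast
    ultimately show ?thesis
      by presburger
  qed
  moreover have "I \<noteq> {}" "I \<subseteq> {..<?L}"
    using JK(1-3) by (auto simp: I_def)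
  ultimately show ?thesis
    using that by blast
qed

lemma has_wzs_Sset_of_two_units:
  assumes sf: "squarefree m" and ge7: "\<forall>p\<in>prime_factors m. 7 \<le> p" and "m > 1"
    and seq: "is_seq m xs" and len: "3 \<le> length xs"
    and ij: "i < length xs" "j < length xs" "i \<noteq> j"
    and units: "coprime (xs ! i) (int m)" "coprime (xs ! j) (int m)"
  shows "has_wzs (Sset m) m xs"
proof -
  let ?I = "{..<length xs}"
  have "\<exists>l<3. l \<noteq> i \<and> l \<noteq> j"
    by presburger
  then obtain l where l: "l < length xs" "l \<noteq> i" "l \<noteq> j"
    using len by (meson less_le_trans)
  show ?thesis
  proof (cases "xs ! l = 0")
    case True
    then show ?thesis
      using has_wzs_of_zero_term[OF one_in_Sset[OF sf \<open>m > 1\<close>] l(1)] by simp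
  next
    case False
    have "0 \<le> xs ! l" "xs ! l < int m"
      using is_seq_nth[OF seq l(1)] by auto
    then obtain q where q: "q \<in> prime_factors m" "\<not> int q dvd xs ! l"
      using prime_factor_not_dvd_residue[OF sf _ _ False] by blast
    have pair: "{i, j} \<subseteq> nondvd_indices p xs ?I" if "p \<in> prime_factors m" for p
      using that ij units coprime_iff_prime_factors_not_dvd[of m] \<open>m > 1\<close>
      by (auto simp: nondvd_indices_def)
    have fin: "finite (nondvd_indices p xs ?I)" for p
      by (simp add: nondvd_indices_def)
    show ?thesis
    proof (rule has_wzs_Sset_of_rich_prime[OF sf ge7 _ _ _ q(1)])
      show "?I \<noteq> {}" "?I \<subseteq> {..<length xs}"
        using ij by auto
      show "\<forall>p\<in>prime_factors m. card (nondvd_indices p xs ?I) \<noteq> 1"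
      proof
        fix p assume "p \<in> prime_factors m"
        then have "card {i, j} \<le> card (nondvd_indices p xs ?I)"
          using pair fin by (intro card_mono)
        then show "card (nondvd_indices p xs ?I) \<noteq> 1"
          using ij(3) by simp
      qed
      have "{i, j, l} \<subseteq> nondvd_indices q xs ?I"
        using pair[OF q(1)] q(2) l(1) by (auto simp: nondvd_indices_def)
      then have "card {i, j, l} \<le> card (nondvd_indices q xs ?I)"
        using fin by (intro card_mono)
      then show "3 \<le> card (nondvd_indices q xs ?I)"
        using ij(3) l(2,3) by simp
    qed
  qed
qed

lemma has_wzs_Sset_of_length:
  assumes sf: "squarefree m" and ge7: "\<forall>p\<in>prime_factors m. 7 \<le> p"
    and card: "2 \<le> card (prime_factors m)"
    and seq: "is_seq m xs" and len: "length xs = card (prime_factors m) + 1"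
  shows "has_wzs (Sset m) m xs"
proof (cases "\<exists>i<length xs. \<exists>j<length xs. i \<noteq> j \<and> coprime (xs ! i) (int m) \<and> coprime (xs ! j) (int m)")
  case True
  moreover have "m > 1"
    using card by (intro gt_1_if_prime_factors_ne_empty) auto
  ultimately show ?thesis
    using has_wzs_Sset_of_two_units[OF sf ge7 _ seq] len card by auto
next
  case False
  obtain I where I: "I \<noteq> {}" "I \<subseteq> {..<length xs}"
    "\<forall>p\<in>prime_factors m. even (card (nondvd_indices p xs I))"
    using even_nondvd_subset_exists[of "prime_factors m" xs] len by auto
  show ?thesis
  proof (rule has_wzs_Sset_of_unique_unit[OF sf ge7 I(1,2)])
    show "\<forall>p\<in>prime_factors m. card (nondvd_indices p xs I) \<noteq> 1"
      using I(3) by fastforce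
    show "\<forall>i\<in>I. \<forall>j\<in>I. coprime (xs ! i) (int m) \<longrightarrow> coprime (xs ! j) (int m) \<longrightarrow> i = j"
      using False I(2) by blast
  qed
qed

text \<open>Two terms x_0, x_1 prime to q cancel with the weights x_1 and m - x_0.\<close>
lemma has_wzs_Uset_of_pair:
  assumes sf: "squarefree m" and P: "prime_factors m = {q}"
    and seq: "is_seq m xs" and len: "length xs = 2"
  shows "has_wzs (Uset m) m xs"
proof -
  have m0: "m \<noteq> 0"
    using sf by (rule squarefree_nat_neq_0)
  have m1: "m > 1"
    using P by (intro gt_1_if_prime_factors_ne_empty) simp
  have x: "0 \<le> xs ! k" "xs ! k < int m" if "k < 2" for k
    using is_seq_nth[OF seq] len that by auto
  show ?thesis
  proof (cases "xs ! 0 = 0 \<or> xs ! 1 = 0")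
    case True
    then show ?thesis
      using has_wzs_of_zero_term[OF one_in_Uset[OF m1], of 0 xs m]
        has_wzs_of_zero_term[OF one_in_Uset[OF m1], of 1 xs m] len by auto
  next
    case False
    have "\<not> int q dvd xs ! k" if "k < 2" "xs ! k \<noteq> 0" for k
      using prime_factor_not_dvd_residue[OF sf x[OF that(1)] that(2)] P by auto
    then have "\<not> int q dvd xs ! 0" "\<not> int q dvd xs ! 1"
      using False by auto
    moreover have "int q dvd int m"
      using P by auto
    ultimately have "\<not> int q dvd int m - xs ! 0"
      using dvd_diff[of "int q" "int m" "int m - xs ! 0"] by auto
    define a where "a k = (if k = 0 then xs ! 1 else int m - xs ! 0)" for k :: nat
    have "\<forall>k\<in>{0, 1}. a k \<in> Uset m"
      using \<open>\<not> int q dvd xs ! 1\<close> \<open>\<not> int q dvd int m - xs ! 0\<close> x[of 0] x[of 1] False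
        coprime_iff_prime_factors_not_dvd[OF m0] P by (auto simp: a_def Uset_def)
    moreover have "(\<Sum>k\<in>{0, 1}. a k * xs ! k) = int m * xs ! 1"
      by (simp add: a_def algebra_simps)
    ultimately show ?thesis
      unfolding has_wzs_def using len by (intro exI[of _ "{0, 1}"] exI[of _ a]) auto
  qed
qed

lemma has_wzs_Uset_of_length:
  assumes sf: "squarefree m" and ge7: "\<forall>p\<in>prime_factors m. 7 \<le> p"
    and card: "1 \<le> card (prime_factors m)"
    and seq: "is_seq m xs" and len: "length xs = card (prime_factors m) + 1"
  shows "has_wzs (Uset m) m xs"
proof (cases "2 \<le> card (prime_factors m)")
  case True
  show ?thesis
    by (rule has_wzs_mono[OF Sset_subset_Uset has_wzs_Sset_of_length[OF sf ge7 True seq len]])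
next
  case False
  then have "card (prime_factors m) = 1"
    using card by simp
  then obtain q where P: "prime_factors m = {q}"
    by (rule card_1_singletonE)
  then show ?thesis
    using has_wzs_Uset_of_pair[OF sf P seq] len by simp
qed

lemma davenport_eqI:
  assumes "\<And>xs. length xs = k + 1 \<Longrightarrow> is_seq m xs \<Longrightarrow> has_wzs A m xs"
    and "\<And>j. j \<le> k \<Longrightarrow> \<exists>xs. length xs = j \<and> is_seq m xs \<and> \<not> has_wzs A m xs"
  shows "davenport A m = k + 1"
  unfolding davenport_def
proof (rule Least_equality)
  show "\<forall>xs. length xs = k + 1 \<and> is_seq m xs \<longrightarrow> has_wzs A m xs"
    using assms(1) by blast
  show "k + 1 \<le> l" if "\<forall>xs. length xs = l \<and> is_seq m xs \<longrightarrow> has_wzs A m xs" for l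
  proof (rule ccontr)
    assume "\<not> k + 1 \<le> l"
    then obtain xs where "length xs = l" "is_seq m xs" "\<not> has_wzs A m xs"
      using assms(2)[of l] by auto
    with that show False
      by blast
  qed
qed

lemma davenport_Sset:
  assumes "squarefree m" "\<forall>p\<in>prime_factors m. 7 \<le> p" "2 \<le> card (prime_factors m)"
  shows "davenport (Sset m) m = card (prime_factors m) + 1"
proof (rule davenport_eqI)
  show "has_wzs (Sset m) m xs" if "length xs = card (prime_factors m) + 1" "is_seq m xs" for xs
    using has_wzs_Sset_of_length assms that by blast
  show "\<exists>xs. length xs = j \<and> is_seq m xs \<and> \<not> has_wzs (Sset m) m xs"
    if "j \<le> card (prime_factors m)" for j
    using zero_sum_free_seq_exists[OF assms(1) Sset_subset_Uset that] by blast
qed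

lemma davenport_Uset:
  assumes "squarefree m" "\<forall>p\<in>prime_factors m. 7 \<le> p" "1 \<le> card (prime_factors m)"
  shows "davenport (Uset m) m = card (prime_factors m) + 1"
proof (rule davenport_eqI)
  show "has_wzs (Uset m) m xs" if "length xs = card (prime_factors m) + 1" "is_seq m xs" for xs
    using has_wzs_Uset_of_length assms that by blast
  show "\<exists>xs. length xs = j \<and> is_seq m xs \<and> \<not> has_wzs (Uset m) m xs"
    if "j \<le> card (prime_factors m)" for j
    using zero_sum_free_seq_exists[OF assms(1) order_refl that] by blast
qed

lemma Omega_squarefree:
  assumes "squarefree n"
  shows "Omega n = card (prime_factors n)"
proof -
  have "count (prime_factorization n) p = count (mset_set (prime_factors n)) p" for p
    using squarefree_multiplicity[OF assms, of p] not_squarefree_0 assms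
    by (cases "p \<in> prime_factors n")
      (auto simp: count_prime_factorization in_prime_factors_iff not_dvd_imp_multiplicity_0)
  then have "prime_factorization n = mset_set (prime_factors n)"
    by (rule multiset_eqI)
  then have "size (prime_factorization n) = size (mset_set (prime_factors n))"
    by (rule arg_cong)
  then show ?thesis
    by (simp add: Omega_def)
qed

section \<open>Extremal sequences\<close>

lemma seq_equivI:
  assumes "1 \<in> A" "c \<in> Uset m" "is_seq m xs" "length ys = length xs"
    and \<sigma>: "bij_betw \<sigma> {..<length xs} {..<length xs}"
    and ys: "\<forall>i<length xs. ys ! \<sigma> i = (c * xs ! i) mod int m"
  shows "seq_equiv A m xs ys"
proof -
  have "m > 0"
    using assms(2) by (auto simp: Uset_def)
  have "is_seq m ys"
    unfolding is_seq_def
  proof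
    fix y assume "y \<in> set ys"
    then obtain k where "k < length xs" "y = ys ! k"
      using assms(4) by (auto simp: in_set_conv_nth)
    moreover from this obtain i where "i < length xs" "k = \<sigma> i"
      using \<sigma> by (metis bij_betw_iff_bijections lessThan_iff)
    ultimately show "y \<in> {0..<int m}"
      using ys \<open>m > 0\<close> by simp
  qed
  then show ?thesis
    unfolding seq_equiv_def using assms by (intro conjI exI[of _ "\<lambda>_. 1"] exI[of _ c] exI[of _ \<sigma>]) auto
qed

lemma has_wzs_permute:
  assumes \<sigma>: "bij_betw \<sigma> {..<length xs} {..<length xs}" and "length ys = length xs"
    and ys: "\<forall>i<length xs. ys ! \<sigma> i = xs ! i"
    and "has_wzs A m ys"
  shows "has_wzs A m xs"
proof -
  obtain J a where J: "J \<noteq> {}" "J \<subseteq> {..<length ys}" "\<forall>j\<in>J. a j \<in> A"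
    "(\<Sum>j\<in>J. a j * ys ! j) mod int m = 0"
    using assms(4) unfolding has_wzs_def by (elim exE conjE)
  define I where "I = {i \<in> {..<length xs}. \<sigma> i \<in> J}"
  have I: "\<sigma> ` I = J" "inj_on \<sigma> I"
    using \<sigma> J(2) assms(2) unfolding I_def bij_betw_def by (auto intro: inj_on_subset)
  have "(\<Sum>j\<in>J. a j * ys ! j) = (\<Sum>i\<in>I. a (\<sigma> i) * ys ! \<sigma> i)"
    using sum.reindex[OF I(2), of "\<lambda>j. a j * ys ! j"] I(1) by simp
  also have "\<dots> = (\<Sum>i\<in>I. a (\<sigma> i) * xs ! i)"
    using ys by (intro sum.cong) (auto simp: I_def)
  finally have "(\<Sum>i\<in>I. a (\<sigma> i) * xs ! i) = (\<Sum>j\<in>J. a j * ys ! j)" ..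
  moreover have "I \<noteq> {}" "I \<subseteq> {..<length xs}" "\<forall>i\<in>I. a (\<sigma> i) \<in> A"
    using I(1) J(1,3) by (auto simp: I_def)
  ultimately show ?thesis
    unfolding has_wzs_def using J(4) by (intro exI[of _ I] exI[of _ "a \<circ> \<sigma>"]) auto
qed

lemma swap_to_front:
  assumes "1 \<in> A" "m > 1" "is_seq m xs" "i0 < length xs"
  obtains ys where "seq_equiv A m xs ys" "length ys = length xs" "ys ! 0 = xs ! i0"
    "set (tl ys) \<subseteq> (\<lambda>k. xs ! k) ` ({..<length xs} - {i0})"
    "\<not> has_wzs A m xs \<longrightarrow> \<not> has_wzs A m ys"
proof -
  let ?L = "length xs"
  define \<sigma> where "\<sigma> i = (if i = 0 then i0 else if i = i0 then 0 else i)" for i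
  have \<sigma>\<sigma>: "\<sigma> (\<sigma> i) = i" for i
    by (simp add: \<sigma>_def)
  have \<sigma>_lt: "\<sigma> i < ?L" if "i < ?L" for i
    using that assms(4) by (auto simp: \<sigma>_def)
  have bij: "bij_betw \<sigma> {..<?L} {..<?L}"
    by (rule bij_betw_byWitness[where f' = \<sigma>]) (auto simp: \<sigma>\<sigma> \<sigma>_lt)
  define ys where "ys = map (\<lambda>i. xs ! \<sigma> i) [0..<?L]"
  have len: "length ys = ?L"
    by (simp add: ys_def)
  have ys_\<sigma>: "\<forall>i<?L. ys ! \<sigma> i = xs ! i"
    by (simp add: ys_def \<sigma>_lt \<sigma>\<sigma>)
  have "\<sigma> i0 = 0"
    by (simp add: \<sigma>_def)
  have "\<forall>i<?L. ys ! \<sigma> i = (1 * xs ! i) mod int m"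
    using ys_\<sigma> is_seq_nth[OF assms(3)] by simp
  then have "seq_equiv A m xs ys"
    using seq_equivI[OF assms(1) one_in_Uset[OF assms(2)] assms(3) len bij] by blast
  moreover have "ys ! 0 = xs ! i0"
    using ys_\<sigma> assms(4) \<open>\<sigma> i0 = 0\<close> by metis
  moreover have "set (tl ys) \<subseteq> (\<lambda>k. xs ! k) ` ({..<?L} - {i0})"
  proof
    fix y assume "y \<in> set (tl ys)"
    then obtain k where "k < length (tl ys)" "y = tl ys ! k"
      by (auto simp: in_set_conv_nth)
    then have "Suc k < ?L" "y = xs ! \<sigma> (Suc k)"
      by (auto simp: ys_def nth_tl)
    moreover have "\<sigma> (Suc k) \<noteq> i0"
      using \<sigma>\<sigma>[of "Suc k"] \<open>\<sigma> i0 = 0\<close> by force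
    ultimately show "y \<in> (\<lambda>k. xs ! k) ` ({..<?L} - {i0})"
      using \<sigma>_lt[of "Suc k"] by blast
  qed
  moreover have "\<not> has_wzs A m xs \<longrightarrow> \<not> has_wzs A m ys"
    using has_wzs_permute[OF bij len ys_\<sigma>] by blast
  ultimately show ?thesis
    using that len by blast
qed

lemma extremal_Uset_of_zero_sum_free:
  assumes "squarefree m" "\<forall>p\<in>prime_factors m. 7 \<le> p" "1 \<le> card (prime_factors m)"
    and "length zs = card (prime_factors m)"
    and "\<not> has_wzs (Uset m) m (map (\<lambda>z. z mod int m) zs)"
  shows "extremal (Uset m) m (map (\<lambda>z. z mod int m) zs)"
proof -
  have "m > 0"
    using squarefree_nat_neq_0[OF assms(1)] by simp
  then have "is_seq m (map (\<lambda>z. z mod int m) zs)"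
    by (auto simp: is_seq_def)
  then show ?thesis
    unfolding extremal_def using davenport_Uset[OF assms(1-3)] assms(4,5) by simp
qed

text \<open>The reduced terms lift to terms divisible by p, which are not units; so a zero-sum subset
  modulo n / p would yield one for the unique-unit criterion modulo n.\<close>
lemma tail_mod_cofactor_zero_sum_free:
  assumes sf: "squarefree n" and ge7: "\<forall>q\<in>prime_factors n. 7 \<le> q" and p: "p \<in> prime_factors n"
    and free: "\<not> has_wzs (Sset n) n ys" and dvd: "\<forall>z\<in>set (tl ys). int p dvd z"
  shows "\<not> has_wzs (Uset (n div p)) (n div p) (map (\<lambda>z. z mod int (n div p)) (tl ys))"
proof
  let ?n' = "n div p"
  let ?T = "map (\<lambda>z. z mod int ?n') (tl ys)"
  assume "has_wzs (Uset ?n') ?n' ?T"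
  then obtain J where J: "J \<noteq> {}" "J \<subseteq> {..<length ?T}"
    "\<forall>q\<in>prime_factors ?n'. card (nondvd_indices q ?T J) \<noteq> 1"
    by (rule has_wzs_imp_no_single_nondvd[OF order_refl])
  define K where "K = Suc ` J"
  have K: "K \<noteq> {}" "K \<subseteq> {..<length ys}"
    using J(1,2) by (auto simp: K_def)
  have p_dvd: "int p dvd ys ! k" if k: "k \<in> K" for k
  proof -
    obtain j where "j < length (tl ys)" "k = Suc j"
      using k J(2) by (auto simp: K_def)
    then show ?thesis
      using dvd nth_mem[of j "tl ys"] by (simp add: nth_tl)
  qed
  have no_single: "card (nondvd_indices q ys K) \<noteq> 1" if q: "q \<in> prime_factors n" for q
  proof (cases "q = p")
    case True
    then have "nondvd_indices q ys K = {}"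
      using p_dvd by (auto simp: nondvd_indices_def)
    then show ?thesis
      by simp
  next
    case False
    then have q': "q \<in> prime_factors ?n'"
      using prime_factors_div_self[OF sf p] q by simp
    then have "int q dvd int ?n'"
      by auto
    then have "nondvd_indices q ys K = Suc ` nondvd_indices q ?T J"
      using J(2) by (auto simp: K_def nondvd_indices_def nth_tl dvd_mod_iff)
    then show ?thesis
      using J(3) q' by (simp add: card_image)
  qed
  have "n \<noteq> 0"
    using sf by (rule squarefree_nat_neq_0)
  then have no_unit: "\<not> coprime (ys ! k) (int n)" if "k \<in> K" for k
    using p_dvd[OF that] p coprime_iff_prime_factors_not_dvd[of n] by blast
  have "has_wzs (Sset n) n ys"
    using has_wzs_Sset_of_unique_unit[OF sf ge7 K] no_single no_unit by blast
  with free show False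
    by blast
qed

lemma single_nondvd_of_unique_unit:
  assumes sf: "squarefree n" and ge7: "\<forall>p\<in>prime_factors n. 7 \<le> p" and "xs \<noteq> []"
    and free: "\<not> has_wzs (Sset n) n xs"
    and unique: "\<forall>i<length xs. \<forall>j<length xs. coprime (xs ! i) (int n) \<longrightarrow> coprime (xs ! j) (int n) \<longrightarrow> i = j"
  obtains p i0 where "p \<in> prime_factors n" "nondvd_indices p xs {..<length xs} = {i0}"
proof -
  let ?I = "{..<length xs}"
  have "?I \<noteq> {}"
    using \<open>xs \<noteq> []\<close> by auto
  then have "\<exists>p\<in>prime_factors n. card (nondvd_indices p xs ?I) = 1"
    using free unique has_wzs_Sset_of_unique_unit[OF sf ge7, of ?I xs] by auto
  then show ?thesis
    using that by (auto simp: card_1_singleton_iff)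
qed

lemma extremal_Sset_reduction:
  assumes sf: "squarefree n" and ge7: "\<forall>p\<in>prime_factors n. 7 \<le> p"
    and card: "2 \<le> card (prime_factors n)"
    and seq: "is_seq n xs" and len: "length xs = card (prime_factors n)"
    and free: "\<not> has_wzs (Sset n) n xs"
    and unique: "\<forall>i<length xs. \<forall>j<length xs. coprime (xs ! i) (int n) \<longrightarrow> coprime (xs ! j) (int n) \<longrightarrow> i = j"
  obtains ys p where "seq_equiv (Sset n) n xs ys" "prime p" "p dvd n" "\<not> int p dvd ys ! 0"
    "\<forall>i\<in>{1..<length ys}. int p dvd ys ! i" "length ys = length xs"
    "extremal (Uset (n div p)) (n div p) (map (\<lambda>y. y mod int (n div p)) (tl ys))"
proof -
  let ?P = "prime_factors n" and ?I = "{..<length xs}"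
  have n1: "n > 1"
    using card by (intro gt_1_if_prime_factors_ne_empty) auto
  have "xs \<noteq> []"
    using len card by auto
  from single_nondvd_of_unique_unit[OF sf ge7 this free unique]
  obtain p i0 where p: "p \<in> ?P" and i0: "nondvd_indices p xs ?I = {i0}" .
  then have "i0 < length xs" "\<not> int p dvd xs ! i0" and p_dvd: "\<forall>k\<in>?I - {i0}. int p dvd xs ! k"
    by (auto simp: nondvd_indices_def)
  obtain ys where ys: "seq_equiv (Sset n) n xs ys" "length ys = length xs" "ys ! 0 = xs ! i0"
    "set (tl ys) \<subseteq> (\<lambda>k. xs ! k) ` (?I - {i0})" "\<not> has_wzs (Sset n) n xs \<longrightarrow> \<not> has_wzs (Sset n) n ys"
    using swap_to_front[OF one_in_Sset[OF sf n1] n1 seq \<open>i0 < length xs\<close>] .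
  have tl_dvd: "\<forall>z\<in>set (tl ys). int p dvd z"
    using ys(4) p_dvd by blast
  have "\<forall>i\<in>{1..<length ys}. int p dvd ys ! i"
  proof
    fix i assume "i \<in> {1..<length ys}"
    then have "ys ! i = tl ys ! (i - 1)" "i - 1 < length (tl ys)"
      by (auto simp: nth_tl)
    then show "int p dvd ys ! i"
      using tl_dvd nth_mem[of "i - 1" "tl ys"] by simp
  qed
  moreover have "extremal (Uset (n div p)) (n div p) (map (\<lambda>y. y mod int (n div p)) (tl ys))"
  proof (rule extremal_Uset_of_zero_sum_free)
    have P': "prime_factors (n div p) = ?P - {p}"
      by (rule prime_factors_div_self[OF sf p])
    have "p * (n div p) = n"
      using p by auto
    then show "squarefree (n div p)"
      using sf by (metis squarefree_mono dvd_triv_right)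
    show "\<forall>q\<in>prime_factors (n div p). 7 \<le> q" "1 \<le> card (prime_factors (n div p))"
      "length (tl ys) = card (prime_factors (n div p))"
      using P' ge7 card p ys(2) len by auto
    show "\<not> has_wzs (Uset (n div p)) (n div p) (map (\<lambda>y. y mod int (n div p)) (tl ys))"
      by (rule tail_mod_cofactor_zero_sum_free[OF sf ge7 p ys(5)[rule_format, OF free] tl_dvd])
  qed
  moreover have "prime p" "p dvd n" "\<not> int p dvd ys ! 0"
    using p ys(3) \<open>\<not> int p dvd xs ! i0\<close> by auto
  ultimately show ?thesis
    using that ys(1,2) by blast
qed

lemma extremal_pair_of_units:
  assumes sf: "squarefree n" and n1: "n > 1" and seq: "is_seq n xs" and len: "length xs = 2"
    and free: "\<not> has_wzs (Sset n) n xs"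
    and units: "coprime (xs ! 0) (int n)" "coprime (xs ! 1) (int n)"
  obtains ys where "seq_equiv (Sset n) n xs ys" "ys ! 0 \<in> Sset n"
    "(- (ys ! 1)) mod int n \<in> Uset n - Sset n"
proof -
  obtain c0 where "[xs ! 0 * c0 = 1] (mod int n)"
    using units(1) coprime_iff_invertible_int by blast
  define c where "c = c0 mod int n"
  have "[c * xs ! 0 = c0 * xs ! 0] (mod int n)"
    by (intro cong_mult cong_refl) (simp add: c_def cong_def)
  also have "[c0 * xs ! 0 = 1] (mod int n)"
    using \<open>[xs ! 0 * c0 = 1] (mod int n)\<close> by (simp add: mult.commute)
  finally have c: "[c * xs ! 0 = 1] (mod int n)" .
  then have "coprime c (int n)"
    using coprime_iff_invertible_int[of c "int n"] by blast
  then have c_unit: "c \<in> Uset n"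
    using n1 by (simp add: Uset_def c_def)
  define ys where "ys = map (\<lambda>x. c * x mod int n) xs"
  have equiv: "seq_equiv (Sset n) n xs ys"
    using seq_equivI[OF one_in_Sset[OF sf n1] c_unit seq, of ys id] by (simp add: ys_def)
  have "ys ! 0 = 1"
    using c n1 len by (simp add: ys_def cong_def)
  then have first: "ys ! 0 \<in> Sset n"
    using one_in_Sset[OF sf n1] by simp
  define z where "z = (- (ys ! 1)) mod int n"
  have z: "[z = - (c * xs ! 1)] (mod int n)"
    using len by (simp add: z_def ys_def cong_def mod_minus_eq)
  have "[z * xs ! 0 + xs ! 1 = - (c * xs ! 1) * xs ! 0 + xs ! 1] (mod int n)"
    by (intro cong_add cong_mult z cong_refl)
  also have "- (c * xs ! 1) * xs ! 0 + xs ! 1 = xs ! 1 * (1 - c * xs ! 0)"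
    by (simp add: algebra_simps)
  also have "[xs ! 1 * (1 - c * xs ! 0) = xs ! 1 * (1 - 1)] (mod int n)"
    by (intro cong_mult cong_diff cong_refl c)
  finally have z_cong: "[z * xs ! 0 + xs ! 1 = 0] (mod int n)"
    by simp
  have "coprime (c * xs ! 1) (int n)"
    using \<open>coprime c (int n)\<close> units(2) by simp
  then have "z \<in> Uset n"
    using n1 len by (simp add: Uset_def z_def ys_def)
  moreover have "z \<notin> Sset n"
  proof
    assume "z \<in> Sset n"
    then have "\<forall>k\<in>{0, 1}. (if k = 0 then z else 1) \<in> Sset n"
      using one_in_Sset[OF sf n1] by simp
    moreover have "(\<Sum>k\<in>{0, 1::nat}. (if k = 0 then z else 1) * xs ! k) mod int n = 0"
      using z_cong by (simp add: cong_def)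
    ultimately have "has_wzs (Sset n) n xs"
      unfolding has_wzs_def using len one_in_Sset[OF sf n1]
      by (intro exI[of _ "{0, 1}"] exI[of _ "\<lambda>k. if k = 0 then z else 1"]) auto
    with free show False
      by blast
  qed
  ultimately show ?thesis
    using that equiv first z_def by blast
qed

lemma extremal_SsetD:
  assumes "squarefree n" "\<forall>p\<in>prime_factors n. 7 \<le> p" "2 \<le> card (prime_factors n)"
    and "extremal (Sset n) n xs"
  shows "is_seq n xs" "length xs = card (prime_factors n)" "\<not> has_wzs (Sset n) n xs" "n > 1"
proof -
  show "is_seq n xs" "length xs = card (prime_factors n)" "\<not> has_wzs (Sset n) n xs"
    using assms(4) davenport_Sset[OF assms(1-3)] by (simp_all add: extremal_def)
  show "n > 1"
    using assms(3) by (intro gt_1_if_prime_factors_ne_empty) auto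
qed

lemma extremal_Sset_structure:
  assumes sf: "squarefree n" and ge7: "\<forall>p\<in>prime_factors n. 7 \<le> p"
    and card: "3 \<le> card (prime_factors n)" and ext: "extremal (Sset n) n xs"
  shows "\<exists>ys p. seq_equiv (Sset n) n xs ys \<and> prime p \<and> p dvd n \<and>
    \<not> int p dvd ys ! 0 \<and> (\<forall>i\<in>{1..<length ys}. int p dvd ys ! i) \<and>
    extremal (Uset (n div p)) (n div p) (map (\<lambda>y. y mod int (n div p)) (tl ys))"
proof -
  have card2: "2 \<le> card (prime_factors n)"
    using card by simp
  note xs = extremal_SsetD[OF sf ge7 card2 ext]
  have "\<forall>i<length xs. \<forall>j<length xs. coprime (xs ! i) (int n) \<longrightarrow> coprime (xs ! j) (int n) \<longrightarrow> i = j"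
  proof (intro allI impI)
    fix i j
    assume ij: "i < length xs" "j < length xs" "coprime (xs ! i) (int n)" "coprime (xs ! j) (int n)"
    show "i = j"
    proof (rule ccontr)
      assume "i \<noteq> j"
      then have "has_wzs (Sset n) n xs"
        using has_wzs_Sset_of_two_units[OF sf ge7 xs(4,1) _ ij(1,2) _ ij(3,4)] xs(2) card by simp
      with xs(3) show False
        by blast
    qed
  qed
  from extremal_Sset_reduction[OF sf ge7 card2 xs(1-3) this] show ?thesis
    by blast
qed

lemma extremal_Sset_structure_two_primes:
  assumes sf: "squarefree n" and ge7: "\<forall>p\<in>prime_factors n. 7 \<le> p"
    and card: "card (prime_factors n) = 2" and ext: "extremal (Sset n) n xs"
  shows "length xs = 2 \<and>
    ((\<exists>ys p. seq_equiv (Sset n) n xs ys \<and> prime p \<and> p dvd n \<and>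
        \<not> int p dvd ys ! 0 \<and> int p dvd ys ! 1 \<and>
        extremal (Uset (n div p)) (n div p) [ys ! 1 mod int (n div p)])
     \<or> (\<exists>ys. seq_equiv (Sset n) n xs ys \<and> ys ! 0 \<in> Sset n \<and>
        (- (ys ! 1)) mod int n \<in> Uset n - Sset n))"
proof -
  have card2: "2 \<le> card (prime_factors n)"
    using card by simp
  note xs = extremal_SsetD[OF sf ge7 card2 ext]
  have len: "length xs = 2"
    using xs(2) card by simp
  show ?thesis
  proof (cases "coprime (xs ! 0) (int n) \<and> coprime (xs ! 1) (int n)")
    case True
    with extremal_pair_of_units[OF sf xs(4,1) len xs(3)] show ?thesis
      using len by blast
  next
    case False
    then have "\<forall>i<length xs. \<forall>j<length xs. coprime (xs ! i) (int n) \<longrightarrow> coprime (xs ! j) (int n) \<longrightarrow> i = j"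
      using len by (auto simp: less_2_cases_iff)
    with extremal_Sset_reduction[OF sf ge7 card2 xs(1,2,3)] len
    obtain ys p where ys: "seq_equiv (Sset n) n xs ys" "prime p" "p dvd n" "\<not> int p dvd ys ! 0"
      "\<forall>i\<in>{1..<length ys}. int p dvd ys ! i" "length ys = 2"
      "extremal (Uset (n div p)) (n div p) (map (\<lambda>y. y mod int (n div p)) (tl ys))"
      by auto
    have "tl ys = [ys ! 1]"
      using ys(6) by (cases ys) (auto simp: length_Suc_conv)
    moreover have "int p dvd ys ! 1"
      using ys(5,6) by simp
    ultimately show ?thesis
      using ys(1-4,7) len by auto
  qed
qed

theorem theorem2p12:
  fixes n :: nat and xs :: "int list"
  assumes "odd n" and "squarefree n"
    and "\<forall>p. prime p \<and> p dvd n \<longrightarrow> p \<ge> 7"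
    and "extremal (Sset n) n xs"
  shows "(Omega n \<ge> 3 \<longrightarrow>
           (\<exists>ys p. seq_equiv (Sset n) n xs ys \<and> prime p \<and> p dvd n \<and>
              \<not> int p dvd ys ! 0 \<and> (\<forall>i\<in>{1..<length ys}. int p dvd ys ! i) \<and>
              extremal (Uset (n div p)) (n div p) (map (\<lambda>y. y mod int (n div p)) (tl ys))))
       \<and> (Omega n = 2 \<longrightarrow> length xs = 2 \<and>
           ((\<exists>ys p. seq_equiv (Sset n) n xs ys \<and> prime p \<and> p dvd n \<and>
              \<not> int p dvd ys ! 0 \<and> int p dvd ys ! 1 \<and>
              extremal (Uset (n div p)) (n div p) [ys ! 1 mod int (n div p)])
            \<or> (\<exists>ys. seq_equiv (Sset n) n xs ys \<and> ys ! 0 \<in> Sset n \<and>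
                 (- (ys ! 1)) mod int n \<in> Uset n - Sset n)))"
proof -
  have ge7: "\<forall>p\<in>prime_factors n. 7 \<le> p"
    using assms(3) by auto
  show ?thesis
    using Omega_squarefree[OF assms(2)]
      extremal_Sset_structure[OF assms(2) ge7 _ assms(4)]
      extremal_Sset_structure_two_primes[OF assms(2) ge7 _ assms(4)]
    by simp
qed

end
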